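(* Let $i\colon\mathcal{A}\to\mathcal{B}$ be an injective closed homomorphism of complete topological rings and let $S$ be a multiplicatively closed subset of $\mathcal{A}$. Then $\widehat{S^{-1}i}\colon\widehat{S^{-1}\mathcal{A}}\to\widehat{i(S)^{-1}\mathcal{B}}$ is an injective homomorphism of topological rings.
   Context: Topological rings are linearly topologized with a countable fundamental system of open ideals; homomorphisms are continuous; complete means the canonical map to $\varprojlim_{\mathfrak{a}}\mathcal{A}/\mathfrak{a}$ (open ideals, discrete quotients) is a topological isomorphism. A multiplicatively closed subset contains $1$ and is stable under multiplication. The separated completed localization $\widehat{S^{-1}\mathcal{A}}$ is the separated completion of $S^{-1}\mathcal{A}$ for the linear topology with fundamental system of ideals $S^{-1}\mathfrak{a}$, $\mathfrak{a}$ open in $\mathcal{A}$, with canonical map $\tilde j_{\mathcal{A}}\colon\mathcal{A}\to\widehat{S^{-1}\mathcal{A}}$ (similarly $\tilde j_{\mathcal{B}}\colon\mathcal{B}\to\widehat{i(S)^{-1}\mathcal{B}}$). $\widehat{S^{-1}i}$ is the unique continuous ring homomorphism with $\widehat{S^{-1}i}\circ\tilde j_{\mathcal{A}}=\tilde j_{\mathcal{B}}\circ i$. *)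

theory Defs
  imports "HOL-Analysis.Analysis"
begin

definition is_ideal :: "'a::comm_ring_1 set \<Rightarrow> bool" where
  "is_ideal I \<longleftrightarrow> 0 \<in> I \<and> (\<forall>x\<in>I. \<forall>y\<in>I. x + y \<in> I) \<and> (\<forall>r. \<forall>x\<in>I. r * x \<in> I)"

definition lin_top :: "'a::comm_ring_1 topology \<Rightarrow> bool" where
  "lin_top T \<longleftrightarrow> topspace T = UNIV \<and>
     (\<exists>F. countable F \<and> F \<noteq> {} \<and> (\<forall>a\<in>F. is_ideal a) \<and>
          (\<forall>a\<in>F. \<forall>b\<in>F. \<exists>c\<in>F. c \<subseteq> a \<inter> b) \<and>
          (\<forall>U. openin T U \<longleftrightarrow> (\<forall>x\<in>U. \<exists>a\<in>F. (\<lambda>y. x + y) ` a \<subseteq> U)))"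

definition open_ideals :: "'a::comm_ring_1 topology \<Rightarrow> 'a set set" where
  "open_ideals T = {a. is_ideal a \<and> openin T a}"

definition ring_hom_fun :: "('a::comm_ring_1 \<Rightarrow> 'b::comm_ring_1) \<Rightarrow> bool" where
  "ring_hom_fun f \<longleftrightarrow> (\<forall>x y. f (x + y) = f x + f y) \<and> (\<forall>x y. f (x * y) = f x * f y) \<and> f 1 = 1"

definition mult_closed :: "'a::comm_ring_1 set \<Rightarrow> bool" where
  "mult_closed S \<longleftrightarrow> 1 \<in> S \<and> (\<forall>x\<in>S. \<forall>y\<in>S. x * y \<in> S)"

definition qrel :: "'a::comm_ring_1 set \<Rightarrow> ('a \<times> 'a) set" where
  "qrel a = {(x, y). x - y \<in> a}"

definition inv_lim :: "'a::comm_ring_1 topology \<Rightarrow> ('a set \<Rightarrow> 'a set) set" where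
  "inv_lim T = {F \<in> PiE (open_ideals T) (\<lambda>a. UNIV // qrel a).
      \<forall>a\<in>open_ideals T. \<forall>b\<in>open_ideals T. a \<subseteq> b \<longrightarrow> F a \<subseteq> F b}"

definition inv_lim_top :: "'a::comm_ring_1 topology \<Rightarrow> ('a set \<Rightarrow> 'a set) topology" where
  "inv_lim_top T = subtopology
      (product_topology (\<lambda>a. discrete_topology (UNIV // qrel a)) (open_ideals T)) (inv_lim T)"

definition canon :: "'a::comm_ring_1 topology \<Rightarrow> 'a \<Rightarrow> ('a set \<Rightarrow> 'a set)" where
  "canon T x = restrict (\<lambda>a. qrel a `` {x}) (open_ideals T)"

definition complete_ring :: "'a::comm_ring_1 topology \<Rightarrow> bool" where
  "complete_ring T \<longleftrightarrow> homeomorphic_map T (inv_lim_top T) (canon T)"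

text \<open>Pairs (x,s), s in S, stand for x/s.  Two fractions are congruent modulo S^{-1}a iff
  their difference lies in S^{-1}a, i.e. some u in S has u(xt - ys) in a.\<close>
definition loc_rel :: "'a::comm_ring_1 set \<Rightarrow> 'a set \<Rightarrow> (('a \<times> 'a) \<times> ('a \<times> 'a)) set" where
  "loc_rel S a = {((x, s), (y, t)). s \<in> S \<and> t \<in> S \<and> (\<exists>u\<in>S. u * (x * t - y * s) \<in> a)}"

definition loc_quot :: "'a::comm_ring_1 set \<Rightarrow> 'a set \<Rightarrow> ('a \<times> 'a) set set" where
  "loc_quot S a = (UNIV \<times> S) // loc_rel S a"

definition cloc_carrier :: "'a::comm_ring_1 topology \<Rightarrow> 'a set \<Rightarrow> ('a set \<Rightarrow> ('a \<times> 'a) set) set" where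
  "cloc_carrier T S = {F \<in> PiE (open_ideals T) (loc_quot S).
      \<forall>a\<in>open_ideals T. \<forall>b\<in>open_ideals T. a \<subseteq> b \<longrightarrow> F a \<subseteq> F b}"

definition cloc_top :: "'a::comm_ring_1 topology \<Rightarrow> 'a set \<Rightarrow> ('a set \<Rightarrow> ('a \<times> 'a) set) topology" where
  "cloc_top T S = subtopology
      (product_topology (\<lambda>a. discrete_topology (loc_quot S a)) (open_ideals T)) (cloc_carrier T S)"

definition cloc_j :: "'a::comm_ring_1 topology \<Rightarrow> 'a set \<Rightarrow> 'a \<Rightarrow> ('a set \<Rightarrow> ('a \<times> 'a) set)" where
  "cloc_j T S x = restrict (\<lambda>a. loc_rel S a `` {(x, 1)}) (open_ideals T)"

definition loc_add :: "'a::comm_ring_1 set \<Rightarrow> 'a set \<Rightarrow> ('a \<times> 'a) set \<Rightarrow> ('a \<times> 'a) set \<Rightarrow> ('a \<times> 'a) set" where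
  "loc_add S a C D = (let (x, s) = (SOME p. p \<in> C); (y, t) = (SOME q. q \<in> D)
                      in loc_rel S a `` {(x * t + y * s, s * t)})"

definition loc_mult :: "'a::comm_ring_1 set \<Rightarrow> 'a set \<Rightarrow> ('a \<times> 'a) set \<Rightarrow> ('a \<times> 'a) set \<Rightarrow> ('a \<times> 'a) set" where
  "loc_mult S a C D = (let (x, s) = (SOME p. p \<in> C); (y, t) = (SOME q. q \<in> D)
                      in loc_rel S a `` {(x * y, s * t)})"

definition cloc_add :: "'a::comm_ring_1 topology \<Rightarrow> 'a set \<Rightarrow> ('a set \<Rightarrow> ('a \<times> 'a) set) \<Rightarrow> ('a set \<Rightarrow> ('a \<times> 'a) set) \<Rightarrow> ('a set \<Rightarrow> ('a \<times> 'a) set)" where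
  "cloc_add T S F G = restrict (\<lambda>a. loc_add S a (F a) (G a)) (open_ideals T)"

definition cloc_mult :: "'a::comm_ring_1 topology \<Rightarrow> 'a set \<Rightarrow> ('a set \<Rightarrow> ('a \<times> 'a) set) \<Rightarrow> ('a set \<Rightarrow> ('a \<times> 'a) set) \<Rightarrow> ('a set \<Rightarrow> ('a \<times> 'a) set)" where
  "cloc_mult T S F G = restrict (\<lambda>a. loc_mult S a (F a) (G a)) (open_ideals T)"

definition cloc_one :: "'a::comm_ring_1 topology \<Rightarrow> 'a set \<Rightarrow> ('a set \<Rightarrow> ('a \<times> 'a) set)" where
  "cloc_one T S = cloc_j T S 1"

definition cloc_ring_hom ::
  "'a::comm_ring_1 topology \<Rightarrow> 'a set \<Rightarrow> 'b::comm_ring_1 topology \<Rightarrow> 'b set \<Rightarrow>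
   (('a set \<Rightarrow> ('a \<times> 'a) set) \<Rightarrow> ('b set \<Rightarrow> ('b \<times> 'b) set)) \<Rightarrow> bool" where
  "cloc_ring_hom TA S TB S' f \<longleftrightarrow>
     f ` cloc_carrier TA S \<subseteq> cloc_carrier TB S' \<and>
     (\<forall>F\<in>cloc_carrier TA S. \<forall>G\<in>cloc_carrier TA S.
        f (cloc_add TA S F G) = cloc_add TB S' (f F) (f G) \<and>
        f (cloc_mult TA S F G) = cloc_mult TB S' (f F) (f G)) \<and>
     f (cloc_one TA S) = cloc_one TB S'"

end

theory Submission
  imports Defs
begin

text \<open>An element F of the completed localization is determined by its classes F a at the open
  ideals a.  Each such class, together with finitely many others, is represented by a single
  fraction x/s; by continuity, the class of f F at an open ideal b of B depends on finitely many
  classes of F only, so it is the class of i x / i s.  Since i is closed and injective, i (A - a)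
  is closed and misses 0.\<close>

lemma is_ideal_0: "is_ideal a \<Longrightarrow> 0 \<in> a"
  and is_ideal_add: "is_ideal a \<Longrightarrow> x \<in> a \<Longrightarrow> y \<in> a \<Longrightarrow> x + y \<in> a"
  and is_ideal_mult_left: "is_ideal a \<Longrightarrow> x \<in> a \<Longrightarrow> r * x \<in> a"
  by (simp_all add: is_ideal_def)

lemma is_ideal_Inter: "K \<noteq> {} \<Longrightarrow> (\<And>c. c \<in> K \<Longrightarrow> is_ideal c) \<Longrightarrow> is_ideal (\<Inter>K)"
  unfolding is_ideal_def by auto

lemma open_ideals_Inter:
  assumes "finite K" "K \<noteq> {}" "K \<subseteq> open_ideals T"
  shows "\<Inter>K \<in> open_ideals T"
  using assms is_ideal_Inter[of K] openin_Inter[of K T] by (auto simp: open_ideals_def)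

lemma lin_top_open_ideal_subset:
  assumes T: "lin_top T" and U: "openin T U" "0 \<in> U"
  obtains c where "c \<in> open_ideals T" "c \<subseteq> U"
proof -
  obtain F where F: "\<forall>c\<in>F. is_ideal c" "\<And>U. openin T U \<longleftrightarrow> (\<forall>x\<in>U. \<exists>c\<in>F. (+) x ` c \<subseteq> U)"
    using T unfolding lin_top_def by blast
  obtain c where c: "c \<in> F" "(+) 0 ` c \<subseteq> U"
    using F(2) U by blast
  have "is_ideal c" using F(1) c(1) by blast
  then have "(+) x ` c \<subseteq> c" if "x \<in> c" for x
    using that is_ideal_add by blast
  then have "openin T c" using F(2) c(1) by blast
  with \<open>is_ideal c\<close> c(2) show thesis by (intro that) (auto simp: open_ideals_def)
qed

lemma ring_hom_fun_0: "ring_hom_fun i \<Longrightarrow> i 0 = 0"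
  unfolding ring_hom_fun_def by (metis add_cancel_left_left add_0)

lemma ring_hom_fun_diff: "ring_hom_fun i \<Longrightarrow> i (x - y) = i x - i y"
  unfolding ring_hom_fun_def by (metis add_diff_cancel diff_add_cancel)

lemma ring_hom_fun_mult: "ring_hom_fun i \<Longrightarrow> i (x * y) = i x * i y"
  by (simp add: ring_hom_fun_def)

lemma mult_closed_image: "ring_hom_fun i \<Longrightarrow> mult_closed S \<Longrightarrow> mult_closed (i ` S)"
  unfolding mult_closed_def ring_hom_fun_def by (metis image_eqI imageE)

lemma closed_injective_hom_open_ideal_preimage:
  assumes "lin_top TA" "lin_top TB" "ring_hom_fun i" "inj i" "closed_map TA TB i"
    and a: "a \<in> open_ideals TA"
  obtains b where "b \<in> open_ideals TB" "i -` b \<subseteq> a"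
proof -
  have "topspace TA = UNIV" "topspace TB = UNIV" using assms(1,2) by (auto simp: lin_top_def)
  moreover have "openin TA a" using a by (simp add: open_ideals_def)
  ultimately have "closedin TB (i ` (- a))"
    using assms(5) by (simp add: closed_map_def closedin_def Compl_eq_Diff_UNIV Diff_Diff_Int)
  then have "openin TB (- i ` (- a))"
    using \<open>topspace TB = UNIV\<close> by (simp add: closedin_def Compl_eq_Diff_UNIV)
  moreover have "0 \<notin> i ` (- a)"
  proof
    assume "0 \<in> i ` (- a)"
    then obtain x where "x \<notin> a" "i x = i 0" using ring_hom_fun_0[OF assms(3)] by auto
    with assms(4) have "0 \<notin> a" by (metis injD)
    with a show False by (simp add: open_ideals_def is_ideal_0)
  qed
  ultimately obtain b where "b \<in> open_ideals TB" "b \<subseteq> - i ` (- a)"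
    using lin_top_open_ideal_subset[OF assms(2)] by blast
  then show thesis by (intro that) auto
qed

lemma loc_rel_iff:
  "((x, s), (y, t)) \<in> loc_rel S a \<longleftrightarrow> s \<in> S \<and> t \<in> S \<and> (\<exists>u\<in>S. u * (x * t - y * s) \<in> a)"
  by (simp add: loc_rel_def)

lemma loc_rel_mono: "a \<subseteq> b \<Longrightarrow> loc_rel S a \<subseteq> loc_rel S b"
  by (auto simp: loc_rel_def)

lemma equiv_loc_rel:
  assumes a: "is_ideal a" and S: "mult_closed S"
  shows "equiv (UNIV \<times> S) (loc_rel S a)"
proof (rule equivI)
  show "refl_on (UNIV \<times> S) (loc_rel S a)"
    using S is_ideal_0[OF a] by (force simp: refl_on_def loc_rel_def mult_closed_def)
  show "sym (loc_rel S a)"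
  proof (rule symI, clarify)
    fix x s y t assume "((x, s), (y, t)) \<in> loc_rel S a"
    then obtain u where "s \<in> S" "t \<in> S" "u \<in> S" "u * (x * t - y * s) \<in> a"
      by (auto simp: loc_rel_iff)
    moreover have "(- 1) * (u * (x * t - y * s)) = u * (y * s - x * t)"
      by (simp add: algebra_simps)
    ultimately show "((y, t), (x, s)) \<in> loc_rel S a"
      using is_ideal_mult_left[OF a] by (metis loc_rel_iff)
  qed
  show "trans (loc_rel S a)"
  proof (rule transI, clarify)
    fix x s y t z r assume "((x, s), (y, t)) \<in> loc_rel S a" "((y, t), (z, r)) \<in> loc_rel S a"
    then obtain u v where uv: "s \<in> S" "t \<in> S" "r \<in> S" "u \<in> S" "v \<in> S"
      "u * (x * t - y * s) \<in> a" "v * (y * r - z * t) \<in> a"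
      by (auto simp: loc_rel_iff)
    have "(v * r) * (u * (x * t - y * s)) + (u * s) * (v * (y * r - z * t)) \<in> a"
      using uv is_ideal_add[OF a] is_ideal_mult_left[OF a] by blast
    moreover have "(v * r) * (u * (x * t - y * s)) + (u * s) * (v * (y * r - z * t))
        = (u * v * t) * (x * r - z * s)"
      by (simp add: algebra_simps)
    moreover have "u * v * t \<in> S" using S uv by (simp add: mult_closed_def)
    ultimately show "((x, s), (z, r)) \<in> loc_rel S a" using uv by (auto simp: loc_rel_iff)
  qed
qed (auto simp: loc_rel_def)

lemma loc_rel_mult:
  assumes a: "is_ideal a" and S: "mult_closed S"
    and "((x, s), (x', s')) \<in> loc_rel S a" "((y, t), (y', t')) \<in> loc_rel S a"
  shows "((x * y, s * t), (x' * y', s' * t')) \<in> loc_rel S a"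
proof -
  obtain u v where uv: "s \<in> S" "t \<in> S" "s' \<in> S" "t' \<in> S" "u \<in> S" "v \<in> S"
    "u * (x * s' - x' * s) \<in> a" "v * (y * t' - y' * t) \<in> a"
    using assms(3,4) by (auto simp: loc_rel_iff)
  have "(v * y * t') * (u * (x * s' - x' * s)) + (u * x' * s) * (v * (y * t' - y' * t)) \<in> a"
    using uv is_ideal_add[OF a] is_ideal_mult_left[OF a] by blast
  moreover have "(v * y * t') * (u * (x * s' - x' * s)) + (u * x' * s) * (v * (y * t' - y' * t))
      = (u * v) * (x * y * (s' * t') - x' * y' * (s * t))"
    by (simp add: algebra_simps)
  ultimately show ?thesis using uv S by (auto simp: loc_rel_iff mult_closed_def)
qed

lemma loc_mult_classes:
  assumes a: "is_ideal a" and S: "mult_closed S" and "s \<in> S" "t \<in> S"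
  shows "loc_mult S a (loc_rel S a `` {(x, s)}) (loc_rel S a `` {(y, t)})
    = loc_rel S a `` {(x * y, s * t)}"
proof -
  have E: "equiv (UNIV \<times> S) (loc_rel S a)" by (rule equiv_loc_rel[OF a S])
  let ?C = "loc_rel S a `` {(x, s)}" and ?D = "loc_rel S a `` {(y, t)}"
  have "(x, s) \<in> ?C" "(y, t) \<in> ?D" using equiv_class_self[OF E] assms(3,4) by auto
  then have "(SOME p. p \<in> ?C) \<in> ?C" "(SOME p. p \<in> ?D) \<in> ?D" by (metis someI)+
  moreover obtain x' s' where C: "(SOME p. p \<in> ?C) = (x', s')" by fastforce
  moreover obtain y' t' where D: "(SOME p. p \<in> ?D) = (y', t')" by fastforce
  ultimately have "((x, s), (x', s')) \<in> loc_rel S a" "((y, t), (y', t')) \<in> loc_rel S a" by auto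
  then have "loc_rel S a `` {(x' * y', s' * t')} = loc_rel S a `` {(x * y, s * t)}"
    using equiv_class_eq[OF E loc_rel_mult[OF a S]] by simp
  then show ?thesis unfolding loc_mult_def C D by simp
qed

lemma loc_rel_hom_preimage:
  assumes "ring_hom_fun i" "i -` b \<subseteq> a" "s \<in> S" "t \<in> S"
    and "((i x, i s), (i y, i t)) \<in> loc_rel (i ` S) b"
  shows "((x, s), (y, t)) \<in> loc_rel S a"
proof -
  obtain u where "u \<in> S" "i u * (i x * i t - i y * i s) \<in> b"
    using assms(5) by (auto simp: loc_rel_iff)
  moreover have "i u * (i x * i t - i y * i s) = i (u * (x * t - y * s))"
    using assms(1) by (simp add: ring_hom_fun_mult ring_hom_fun_diff)
  ultimately show ?thesis using assms(2-4) by (auto simp: loc_rel_iff)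
qed

definition cloc_frac ::
    "'a::comm_ring_1 topology \<Rightarrow> 'a set \<Rightarrow> 'a \<Rightarrow> 'a \<Rightarrow> ('a set \<Rightarrow> ('a \<times> 'a) set)" where "cloc_frac T S x s = restrict (\<lambda>a. loc_rel S a `` {(x, s)}) (open_ideals T)"

lemma cloc_j_eq_cloc_frac: "cloc_j T S x = cloc_frac T S x 1"
  by (simp add: cloc_j_def cloc_frac_def)

lemma cloc_frac_in_carrier: "s \<in> S \<Longrightarrow> cloc_frac T S x s \<in> cloc_carrier T S"
  unfolding cloc_carrier_def cloc_frac_def loc_quot_def
  using loc_rel_mono by (auto intro!: quotientI)

lemma cloc_mult_cloc_frac:
  assumes S: "mult_closed S" and "s \<in> S" "t \<in> S"
  shows "cloc_mult T S (cloc_frac T S x s) (cloc_frac T S y t) = cloc_frac T S (x * y) (s * t)"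
proof
  fix a
  show "cloc_mult T S (cloc_frac T S x s) (cloc_frac T S y t) a = cloc_frac T S (x * y) (s * t) a"
    using loc_mult_classes[OF _ S assms(2,3), of a x y]
    by (simp add: cloc_mult_def cloc_frac_def open_ideals_def)
qed

lemma cloc_frac_mult_denom:
  assumes S: "mult_closed S" and s: "s \<in> S"
  shows "cloc_mult T S (cloc_frac T S x s) (cloc_frac T S s 1) = cloc_frac T S x 1"
proof -
  have "loc_rel S a `` {(x * s, s * 1)} = loc_rel S a `` {(x, 1)}" if "is_ideal a" for a
  proof (rule equiv_class_eq[OF equiv_loc_rel[OF that S]])
    show "((x * s, s * 1), x, 1) \<in> loc_rel S a"
      using S s is_ideal_0[OF that] by (auto simp: loc_rel_iff mult_closed_def intro!: bexI[of _ 1])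
  qed
  then have "cloc_frac T S (x * s) (s * 1) = cloc_frac T S x 1"
    unfolding cloc_frac_def open_ideals_def by (auto intro!: restrict_ext)
  with cloc_mult_cloc_frac[OF S s] S show ?thesis
    by (simp add: mult_closed_def)
qed

lemma cloc_carrier_class:
  assumes "F \<in> cloc_carrier T S" "a \<in> open_ideals T"
  obtains x s where "s \<in> S" "F a = loc_rel S a `` {(x, s)}"
proof -
  have "F a \<in> loc_quot S a" using assms by (auto simp: cloc_carrier_def)
  then show thesis using that unfolding loc_quot_def by (auto elim!: quotientE)
qed

lemma cloc_carrier_eqI:
  assumes "F \<in> cloc_carrier T S" "G \<in> cloc_carrier T S"
    and "\<And>a. a \<in> open_ideals T \<Longrightarrow> F a = G a"
  shows "F = G"
  using assms by (auto simp: cloc_carrier_def intro: PiE_ext)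

lemma cloc_carrier_class_mono:
  assumes S: "mult_closed S" and F: "F \<in> cloc_carrier T S"
    and a: "a \<in> open_ideals T" and a': "a' \<in> open_ideals T" "a \<subseteq> a'"
    and s: "s \<in> S" and Fa: "F a = loc_rel S a `` {(x, s)}"
  shows "F a' = loc_rel S a' `` {(x, s)}"
proof -
  have E: "equiv (UNIV \<times> S) (loc_rel S c)" if "c \<in> open_ideals T" for c
    using equiv_loc_rel[OF _ S] that by (simp add: open_ideals_def)
  have "(x, s) \<in> F a" using Fa equiv_class_self[OF E[OF a]] s by auto
  also have "F a \<subseteq> F a'" using F a a' by (auto simp: cloc_carrier_def)
  finally have xs: "(x, s) \<in> F a'" .
  obtain y t where t: "t \<in> S" "F a' = loc_rel S a' `` {(y, t)}"
    using cloc_carrier_class[OF F a'(1)] .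
  then have "((y, t), (x, s)) \<in> loc_rel S a'" using xs by auto
  from equiv_class_eq[OF E[OF a'(1)] this] t show ?thesis by simp
qed

lemma cloc_carrier_approx_by_frac:
  assumes S: "mult_closed S" and F: "F \<in> cloc_carrier T S"
    and K: "finite K" "K \<subseteq> open_ideals T"
  obtains x s where "s \<in> S" "\<forall>c\<in>K. F c = cloc_frac T S x s c"
proof (cases "K = {}")
  case True
  then show thesis using S that[of 1] by (simp add: mult_closed_def)
next
  case False
  have a: "\<Inter>K \<in> open_ideals T" using open_ideals_Inter[OF K(1) False K(2)] .
  obtain x s where s: "s \<in> S" "F (\<Inter>K) = loc_rel S (\<Inter>K) `` {(x, s)}"
    using cloc_carrier_class[OF F a] .
  have "F c = cloc_frac T S x s c" if "c \<in> K" for c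
    using cloc_carrier_class_mono[OF S F a _ _ s] that K(2)
    by (auto simp: cloc_frac_def)
  then show thesis using that[OF s(1)] by blast
qed

lemma cloc_ring_hom_cloc_frac:
  assumes i: "ring_hom_fun i" and S: "mult_closed S"
    and f: "cloc_ring_hom TA S TB (i ` S) f"
    and fj: "\<And>x. f (cloc_j TA S x) = cloc_j TB (i ` S) (i x)"
    and s: "s \<in> S" and b: "b \<in> open_ideals TB"
  shows "f (cloc_frac TA S x s) b = loc_rel (i ` S) b `` {(i x, i s)}"
proof -
  have S': "mult_closed (i ` S)" using mult_closed_image[OF i S] .
  have one: "1 \<in> S" "1 \<in> i ` S" using S S' by (simp_all add: mult_closed_def)
  have Ib: "is_ideal b" using b by (simp add: open_ideals_def)
  have E: "equiv (UNIV \<times> i ` S) (loc_rel (i ` S) b)" using equiv_loc_rel[OF Ib S'] .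
  have H: "f (cloc_frac TA S x s) \<in> cloc_carrier TB (i ` S)"
    using f cloc_frac_in_carrier[OF s] unfolding cloc_ring_hom_def by blast
  obtain z r where r: "r \<in> i ` S" "f (cloc_frac TA S x s) b = loc_rel (i ` S) b `` {(z, r)}"
    using cloc_carrier_class[OF H b] .
  txt \<open>f is only known on the fractions x/1; x/s is pinned down by x/s \<cdot> s/1 = x/1.\<close>
  have "f (cloc_frac TA S s 1) = cloc_frac TB (i ` S) (i s) 1"
    using fj[of s] by (simp only: cloc_j_eq_cloc_frac)
  then have "f (cloc_mult TA S (cloc_frac TA S x s) (cloc_frac TA S s 1))
      = cloc_mult TB (i ` S) (f (cloc_frac TA S x s)) (cloc_frac TB (i ` S) (i s) 1)"
    using f cloc_frac_in_carrier[OF s] cloc_frac_in_carrier[OF one(1)]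
    unfolding cloc_ring_hom_def by metis
  then have "cloc_frac TB (i ` S) (i x) 1
      = cloc_mult TB (i ` S) (f (cloc_frac TA S x s)) (cloc_frac TB (i ` S) (i s) 1)"
    using fj[of x] by (simp add: cloc_frac_mult_denom[OF S s] cloc_j_eq_cloc_frac)
  then have "loc_rel (i ` S) b `` {(i x, 1)}
      = loc_mult (i ` S) b (f (cloc_frac TA S x s) b) (loc_rel (i ` S) b `` {(i s, 1)})"
    using b by (drule_tac fun_cong[of _ _ b]) (simp add: cloc_mult_def cloc_frac_def)
  also have "\<dots> = loc_rel (i ` S) b `` {(z * i s, r * 1)}"
    unfolding r(2) using loc_mult_classes[OF Ib S' r(1) one(2)] .
  finally have "((z * i s, r * 1), (i x, 1)) \<in> loc_rel (i ` S) b"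
    by (rule eq_equiv_class[OF sym E]) (use one in auto)
  then have "((z, r), (i x, i s)) \<in> loc_rel (i ` S) b"
    using r(1) s by (auto simp: loc_rel_iff)
  from equiv_class_eq[OF E this] r(2) show ?thesis by simp
qed

lemma topspace_cloc_top: "topspace (cloc_top T S) = cloc_carrier T S"
  unfolding cloc_top_def cloc_carrier_def by auto

lemma openin_cloc_top_finite_support:
  assumes U: "openin (cloc_top T S) U" and F: "F \<in> U"
  obtains J where "finite J" "J \<subseteq> open_ideals T"
    "\<forall>H\<in>cloc_carrier T S. (\<forall>a\<in>J. H a = F a) \<longrightarrow> H \<in> U"
proof -
  obtain V where V: "openin (product_topology (\<lambda>a. discrete_topology (loc_quot S a)) (open_ideals T)) V"
    "U = V \<inter> cloc_carrier T S"
    using U unfolding cloc_top_def openin_subtopology by blast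
  then obtain W where W: "finite {a \<in> open_ideals T. W a \<noteq> loc_quot S a}"
    "F \<in> PiE (open_ideals T) W" "PiE (open_ideals T) W \<subseteq> V"
    using F unfolding openin_product_topology_alt by auto
  have "H \<in> U" if H: "H \<in> cloc_carrier T S"
    and agree: "\<forall>a\<in>{a \<in> open_ideals T. W a \<noteq> loc_quot S a}. H a = F a" for H
  proof -
    have "H \<in> PiE (open_ideals T) W"
    proof (rule PiE_I)
      show "H a \<in> W a" if "a \<in> open_ideals T" for a
        using H W(2) agree that by (cases "W a = loc_quot S a") (auto simp: cloc_carrier_def)
    qed (use H in \<open>auto simp: cloc_carrier_def\<close>)
    with H W(3) V(2) show "H \<in> U" by blast
  qed
  with W(1) show thesis by (intro that) auto
qed

lemma continuous_map_cloc_top_coordinate_local: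
  assumes f: "continuous_map (cloc_top TA S) (cloc_top TB S') f"
    and F: "F \<in> cloc_carrier TA S" and b: "b \<in> open_ideals TB"
  obtains J where "finite J" "J \<subseteq> open_ideals TA"
    "\<forall>H\<in>cloc_carrier TA S. (\<forall>a\<in>J. H a = F a) \<longrightarrow> f H b = f F b"
proof -
  have "continuous_map (cloc_top TB S') (discrete_topology (loc_quot S' b)) (\<lambda>H. H b)"
    unfolding cloc_top_def
    by (rule continuous_map_from_subtopology[OF continuous_map_product_projection[OF b]])
  then have fb: "continuous_map (cloc_top TA S) (discrete_topology (loc_quot S' b)) (\<lambda>H. f H b)"
    using continuous_map_compose[OF f] by (simp add: o_def)
  then have "f F b \<in> loc_quot S' b"
    using F by (auto simp: continuous_map_def topspace_cloc_top Pi_iff)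
  let ?U = "{H \<in> topspace (cloc_top TA S). f H b \<in> {f F b}}"
  have "openin (cloc_top TA S) ?U"
    using \<open>f F b \<in> loc_quot S' b\<close> by (intro openin_continuous_map_preimage[OF fb]) auto
  moreover have "F \<in> ?U"
    using F by (simp add: topspace_cloc_top)
  ultimately obtain J where "finite J" "J \<subseteq> open_ideals TA"
    "\<forall>H\<in>cloc_carrier TA S. (\<forall>a\<in>J. H a = F a) \<longrightarrow> H \<in> ?U"
    by (rule openin_cloc_top_finite_support)
  then show thesis by (intro that) auto
qed

lemma cloc_coordinates_by_frac:
  assumes i: "ring_hom_fun i" and S: "mult_closed S"
    and f: "cloc_ring_hom TA S TB (i ` S) f"
    and f_cont: "continuous_map (cloc_top TA S) (cloc_top TB (i ` S)) f"
    and fj: "\<And>x. f (cloc_j TA S x) = cloc_j TB (i ` S) (i x)"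
    and F: "F \<in> cloc_carrier TA S" and a: "a \<in> open_ideals TA" and b: "b \<in> open_ideals TB"
  obtains x s where "s \<in> S" "F a = loc_rel S a `` {(x, s)}"
    "f F b = loc_rel (i ` S) b `` {(i x, i s)}"
proof -
  obtain J where J: "finite J" "J \<subseteq> open_ideals TA"
    "\<forall>H\<in>cloc_carrier TA S. (\<forall>c\<in>J. H c = F c) \<longrightarrow> f H b = f F b"
    using continuous_map_cloc_top_coordinate_local[OF f_cont F b] .
  have "finite (insert a J)" "insert a J \<subseteq> open_ideals TA" using J(1,2) a by auto
  then obtain x s where s: "s \<in> S" and xs: "\<forall>c\<in>insert a J. F c = cloc_frac TA S x s c"
    by (rule cloc_carrier_approx_by_frac[OF S F])
  have "F a = loc_rel S a `` {(x, s)}"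
    using xs a by (simp add: cloc_frac_def)
  moreover have "f F b = f (cloc_frac TA S x s) b"
    using J(3) cloc_frac_in_carrier[OF s] xs by auto
  ultimately show thesis
    using that[OF s] cloc_ring_hom_cloc_frac[OF i S f fj s b] by simp
qed

theorem lemma1p21:
  fixes TA :: "'a::comm_ring_1 topology" and TB :: "'b::comm_ring_1 topology"
    and i :: "'a \<Rightarrow> 'b" and S :: "'a set"
    and f :: "('a set \<Rightarrow> ('a \<times> 'a) set) \<Rightarrow> ('b set \<Rightarrow> ('b \<times> 'b) set)"
  assumes "lin_top TA" and "lin_top TB"
    and "complete_ring TA" and "complete_ring TB"
    and "ring_hom_fun i" and "continuous_map TA TB i"
    and "inj i" and "closed_map TA TB i"
    and "mult_closed S"
    and "cloc_ring_hom TA S TB (i ` S) f"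
    and "continuous_map (cloc_top TA S) (cloc_top TB (i ` S)) f"
    and "\<And>x. f (cloc_j TA S x) = cloc_j TB (i ` S) (i x)"
  shows "inj_on f (cloc_carrier TA S)"
proof (rule inj_onI)
  note coordinates = cloc_coordinates_by_frac[OF assms(5,9-12)]
  fix F G assume F: "F \<in> cloc_carrier TA S" and G: "G \<in> cloc_carrier TA S" and fFG: "f F = f G"
  show "F = G"
  proof (rule cloc_carrier_eqI[OF F G])
    fix a assume a: "a \<in> open_ideals TA"
    obtain b where b: "b \<in> open_ideals TB" "i -` b \<subseteq> a"
      using closed_injective_hom_open_ideal_preimage[OF assms(1,2,5,7,8) a] .
    obtain x s where s: "s \<in> S" "F a = loc_rel S a `` {(x, s)}"
      and fF: "f F b = loc_rel (i ` S) b `` {(i x, i s)}"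
      using coordinates[OF F a b(1)] .
    obtain y t where t: "t \<in> S" "G a = loc_rel S a `` {(y, t)}"
      and fG: "f G b = loc_rel (i ` S) b `` {(i y, i t)}"
      using coordinates[OF G a b(1)] .
    have "((i x, i s), (i y, i t)) \<in> loc_rel (i ` S) b"
    proof (rule eq_equiv_class[OF _ equiv_loc_rel])
      show "is_ideal b" using b(1) by (simp add: open_ideals_def)
      show "mult_closed (i ` S)" using mult_closed_image[OF assms(5,9)] .
    qed (use fF fG fFG t(1) in simp_all)
    then have "((x, s), (y, t)) \<in> loc_rel S a"
      by (rule loc_rel_hom_preimage[OF assms(5) b(2) s(1) t(1)])
    then show "F a = G a"
      using s(2) t(2) equiv_class_eq[OF equiv_loc_rel[OF _ assms(9)]] a
      by (simp add: open_ideals_def)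
  qed
qed

end
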